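(* Let $K,n\in\mathbb{N}^*$ and $\mu\in H^3((0,1),\mathbb{R})$ with $\sum_jj^{4n}|c_j|<\infty$ and $A^n_K\neq0$. There exists $T^*>0$ such that for every $T\in(0,T^* )$ and every real $s\in L^2(0,T)$, $-\operatorname{sign}(A^n_K)Q_n(s)\ge\frac{|A^n_K|}4\int_0^Ts(t)^2dt$, where $$Q_n(s)=-A^n_K\int_0^Ts(t)^2\cos[(\lambda_K-\lambda_1)(t-T)]dt+\int_0^Ts(t)\int_0^ts(\tau)k_n(t,\tau)d\tau dt,$$ $$k_n(t,\tau)=(-1)^{n+1}\sum_{j\ge1}(\lambda_K-\lambda_j)^n(\lambda_j-\lambda_1)^nc_j\sin\big(\lambda_K(t-T)+\lambda_j(\tau-t)+\lambda_1(T-\tau)\big).$$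
   Context: $\varphi_j=\sqrt2\sin(j\pi x)$, $\lambda_j=(j\pi)^2$, $\langle f,g\rangle=\int_0^1f\bar g$, $c_j=\langle\mu\varphi_1,\varphi_j\rangle\langle\mu\varphi_K,\varphi_j\rangle$, $A^n_K=(-1)^{n-1}\sum_{j}(\lambda_j-\frac{\lambda_1+\lambda_K}2)(\lambda_K-\lambda_j)^{n-1}(\lambda_j-\lambda_1)^{n-1}c_j$. *)

theory Defs
  imports "HOL-Analysis.Analysis"
begin

text \<open>Eigenfunctions and eigenvalues of the Dirichlet Laplacian on (0,1).\<close>
definition phi :: "nat \<Rightarrow> real \<Rightarrow> real" where
  "phi j x = sqrt 2 * sin (real j * pi * x)"

definition lam :: "nat \<Rightarrow> real" where
  "lam j = (real j * pi)^2"

definition ip01 :: "(real \<Rightarrow> real) \<Rightarrow> (real \<Rightarrow> real) \<Rightarrow> real" where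
  "ip01 f g = integral\<^sup>L (lebesgue_on {0..1}) (\<lambda>x. f x * g x)"

text \<open>Sobolev space H^3((0,1),R), via the continuous representative:
  mu, mu', mu'' absolutely continuous with mu''' in L^2(0,1).\<close>
definition H3_01 :: "(real \<Rightarrow> real) \<Rightarrow> bool" where
  "H3_01 mu \<longleftrightarrow> (\<exists>f1 f2 f3.
      f3 \<in> borel_measurable (lebesgue_on {0..1}) \<and>
      integrable (lebesgue_on {0..1}) (\<lambda>x. (f3 x)^2) \<and>
      (\<forall>x\<in>{0..1}.
         mu x = mu 0 + integral\<^sup>L (lebesgue_on {0..x}) f1 \<and>
         f1 x = f1 0 + integral\<^sup>L (lebesgue_on {0..x}) f2 \<and>
         f2 x = f2 0 + integral\<^sup>L (lebesgue_on {0..x}) f3))"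

definition cc :: "(real \<Rightarrow> real) \<Rightarrow> nat \<Rightarrow> nat \<Rightarrow> real" where
  "cc mu K j = ip01 (\<lambda>x. mu x * phi 1 x) (phi j) * ip01 (\<lambda>x. mu x * phi K x) (phi j)"

text \<open>A^n_K; the series runs over j \<ge> 1 (index shifted by Suc).\<close>
definition AnK :: "(real \<Rightarrow> real) \<Rightarrow> nat \<Rightarrow> nat \<Rightarrow> real" where
  "AnK mu n K = (-1)^(n-1) * (\<Sum>i. let j = Suc i in
      (lam j - (lam 1 + lam K) / 2) * (lam K - lam j)^(n-1) * (lam j - lam 1)^(n-1) * cc mu K j)"

definition kern :: "(real \<Rightarrow> real) \<Rightarrow> nat \<Rightarrow> nat \<Rightarrow> real \<Rightarrow> real \<Rightarrow> real \<Rightarrow> real" where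
  "kern mu n K T t \<tau> = (-1)^(n+1) * (\<Sum>i. let j = Suc i in
      (lam K - lam j)^n * (lam j - lam 1)^n * cc mu K j *
      sin (lam K * (t - T) + lam j * (\<tau> - t) + lam 1 * (T - \<tau>)))"

definition Qn :: "(real \<Rightarrow> real) \<Rightarrow> nat \<Rightarrow> nat \<Rightarrow> real \<Rightarrow> (real \<Rightarrow> real) \<Rightarrow> real" where
  "Qn mu n K T s =
     - AnK mu n K * integral\<^sup>L (lebesgue_on {0..T})
         (\<lambda>t. (s t)^2 * cos ((lam K - lam 1) * (t - T)))
     + integral\<^sup>L (lebesgue_on {0..T})
         (\<lambda>t. s t * integral\<^sup>L (lebesgue_on {0..t}) (\<lambda>\<tau>. s \<tau> * kern mu n K T t \<tau>))"

end

theory Submission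
  imports Defs
begin

text \<open>For small T the quadratic form is dominated by its local part: the kernel k_n is
  uniformly bounded (by the weighted summability of the c_j), so by Cauchy-Schwarz the
  Volterra term is at most a constant times T times the squared L2 norm of s, while the
  cosine weight stays above 1/2 on the short interval [0,T]. Hence the local term
  contributes at least half of the absolute value of A^n_K times the squared norm, and
  the Volterra term costs at most a quarter of it.\<close>

lemma lam_nonneg: "lam j \<ge> 0"
  by (simp add: lam_def)

lemma lam_mono: "i \<le> j \<Longrightarrow> lam i \<le> lam j"
  unfolding lam_def by (intro power_mono mult_right_mono) auto

lemma lam_eq: "lam j = pi^2 * real j^2"
  by (simp add: lam_def power_mult_distrib)

lemma abs_lam_diff_coeff_le:
  fixes c :: real
  shows "\<bar>(lam K - lam (Suc i))^n * (lam (Suc i) - lam 1)^n * c\<bar>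
     \<le> (pi^4 * (real K^2 + 1))^n * (real (Suc i) ^ (4*n) * \<bar>c\<bar>)"
proof -
  let ?j = "real (Suc i)"
  have "real K^2 \<le> real K^2 * ?j^2"
    by (intro mult_le_cancel_left1[THEN iffD2] impI) (simp add: one_le_power)
  then have "pi^2 * (real K^2 + ?j^2) \<le> pi^2 * ((real K^2 + 1) * ?j^2)"
    by (intro mult_left_mono) (simp_all add: algebra_simps)
  then have "lam K + lam (Suc i) \<le> pi^2 * (real K^2 + 1) * ?j^2"
    by (metis lam_eq distrib_left mult.assoc)
  then have bound_K: "\<bar>lam K - lam (Suc i)\<bar> \<le> pi^2 * (real K^2 + 1) * ?j^2"
    using lam_nonneg[of K] lam_nonneg[of "Suc i"] by linarith
  have "lam 1 \<le> lam (Suc i)"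
    by (rule lam_mono) simp
  then have bound_1: "\<bar>lam (Suc i) - lam 1\<bar> \<le> pi^2 * ?j^2"
    using lam_nonneg[of 1] lam_eq[of "Suc i"] by simp
  have "\<bar>(lam K - lam (Suc i))^n * (lam (Suc i) - lam 1)^n * c\<bar>
      = \<bar>lam K - lam (Suc i)\<bar>^n * \<bar>lam (Suc i) - lam 1\<bar>^n * \<bar>c\<bar>"
    by (simp add: abs_mult power_abs)
  also have "\<dots> \<le> (pi^2 * (real K^2 + 1) * ?j^2)^n * (pi^2 * ?j^2)^n * \<bar>c\<bar>"
    by (intro mult_right_mono mult_mono power_mono bound_K bound_1) auto
  also have "\<dots> = (pi^4 * (real K^2 + 1))^n * (?j ^ (4*n) * \<bar>c\<bar>)"
  proof -
    have "(pi^2 * (real K^2 + 1) * ?j^2) * (pi^2 * ?j^2) = (pi^4 * (real K^2 + 1)) * ?j^4"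
      by (simp add: algebra_simps power2_eq_square power4_eq_xxxx)
    then have "(pi^2 * (real K^2 + 1) * ?j^2)^n * (pi^2 * ?j^2)^n
        = (pi^4 * (real K^2 + 1))^n * (?j^4)^n"
      by (metis power_mult_distrib)
    then show ?thesis
      by (simp add: power_mult[symmetric] mult.commute mult.left_commute)
  qed
  finally show ?thesis .
qed

lemma abs_kern_le:
  assumes summable: "summable (\<lambda>i. real (Suc i) ^ (4 * n) * \<bar>cc mu K (Suc i)\<bar>)"
  shows "\<bar>kern mu n K T t \<tau>\<bar>
    \<le> (pi^4 * (real K^2 + 1))^n * (\<Sum>i. real (Suc i) ^ (4 * n) * \<bar>cc mu K (Suc i)\<bar>)"
proof -
  define C where "C = (pi^4 * (real K^2 + 1))^n"
  define b where "b i = real (Suc i) ^ (4 * n) * \<bar>cc mu K (Suc i)\<bar>" for i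
  define f where "f = (\<lambda>i. let j = Suc i in
      (lam K - lam j)^n * (lam j - lam 1)^n * cc mu K j *
      sin (lam K * (t - T) + lam j * (\<tau> - t) + lam 1 * (T - \<tau>)))"
  have f_le: "\<bar>f i\<bar> \<le> C * b i" for i
  proof -
    have "\<bar>f i\<bar> \<le> \<bar>(lam K - lam (Suc i))^n * (lam (Suc i) - lam 1)^n * cc mu K (Suc i)\<bar>"
      by (simp add: f_def Let_def abs_mult mult_left_le)
    also have "\<dots> \<le> C * b i"
      unfolding C_def b_def by (rule abs_lam_diff_coeff_le)
    finally show ?thesis .
  qed
  have summable_Cb: "summable (\<lambda>i. C * b i)"
    using summable unfolding b_def by (intro summable_mult)
  have summable_f: "summable (\<lambda>i. \<bar>f i\<bar>)"
    by (rule summable_comparison_test[OF _ summable_Cb]) (use f_le in auto)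
  have "\<bar>kern mu n K T t \<tau>\<bar> = \<bar>suminf f\<bar>"
    unfolding kern_def f_def by (simp add: abs_mult)
  also have "\<dots> \<le> (\<Sum>i. \<bar>f i\<bar>)"
    by (rule summable_rabs[OF summable_f])
  also have "\<dots> \<le> (\<Sum>i. C * b i)"
    by (rule suminf_le[OF f_le summable_f summable_Cb])
  also have "\<dots> = C * (\<Sum>i. b i)"
    using summable unfolding b_def by (rule suminf_mult)
  finally show ?thesis
    unfolding C_def b_def .
qed

lemma cos_ge_half: "\<bar>x\<bar> \<le> 1 \<Longrightarrow> cos (x::real) \<ge> 1/2"
  using cos_monotone_0_pi_le[of "\<bar>x\<bar>" "pi/3"] pi_gt3 by (simp add: cos_60)

lemma integrable_abs_if_square_integrable:
  fixes s :: "real \<Rightarrow> real"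
  assumes "s \<in> borel_measurable M" and "finite_measure M"
    and "integrable M (\<lambda>t. (s t)^2)"
  shows "integrable M (\<lambda>t. \<bar>s t\<bar>)"
proof (rule Bochner_Integration.integrable_bound)
  show "integrable M (\<lambda>t. (s t)^2 + 1)"
    using assms(2,3) by (simp add: finite_measure.integrable_const)
  show "(\<lambda>t. \<bar>s t\<bar>) \<in> borel_measurable M"
    using assms(1) by measurable
  have "\<bar>y\<bar> \<le> y^2 + 1" for y :: real
  proof -
    have "0 \<le> (\<bar>y\<bar> - 1)^2" by simp
    then have "0 \<le> y^2 + 1 - 2 * \<bar>y\<bar>"
      by (simp add: power2_diff power2_abs)
    then show ?thesis
      using zero_le_power2[of y] by linarith
  qed
  then show "AE t in M. norm \<bar>s t\<bar> \<le> norm ((s t)^2 + 1)"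
    by simp
qed

lemma square_integral_abs_le:
  fixes s :: "real \<Rightarrow> real"
  assumes T: "T > 0" and measurable: "s \<in> borel_measurable (lebesgue_on {0..T})"
    and square_integrable: "integrable (lebesgue_on {0..T}) (\<lambda>t. (s t)^2)"
  shows "(integral\<^sup>L (lebesgue_on {0..T}) (\<lambda>t. \<bar>s t\<bar>))^2
    \<le> T * integral\<^sup>L (lebesgue_on {0..T}) (\<lambda>t. (s t)^2)"
proof -
  let ?M = "lebesgue_on {0..T}"
  define I where "I = integral\<^sup>L ?M (\<lambda>t. \<bar>s t\<bar>)"
  define S where "S = integral\<^sup>L ?M (\<lambda>t. (s t)^2)"
  have abs_integrable: "integrable ?M (\<lambda>t. \<bar>s t\<bar>)"
    using measurable square_integrable
    by (intro integrable_abs_if_square_integrable) (auto intro: finite_measure_lebesgue_on)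
  \<comment> \<open>Integrate 2 a |s| \<le> s^2 + a^2 and choose a = I / T.\<close>
  have AM_GM: "2 * a * I \<le> S + a^2 * T" for a
  proof -
    have "2 * a * I = integral\<^sup>L ?M (\<lambda>t. 2 * a * \<bar>s t\<bar>)"
      unfolding I_def by simp
    also have "\<dots> \<le> integral\<^sup>L ?M (\<lambda>t. (s t)^2 + a^2)"
    proof (rule integral_mono)
      fix t
      have "0 \<le> (\<bar>s t\<bar> - a)^2" by simp
      then show "2 * a * \<bar>s t\<bar> \<le> (s t)^2 + a^2"
        by (simp add: power2_eq_square algebra_simps)
    qed (use abs_integrable square_integrable in auto)
    also have "\<dots> = S + a^2 * T"
      unfolding S_def using square_integrable T by (simp add: measure_restrict_space)
    finally show ?thesis .
  qed
  from AM_GM[of "I/T"] T have "I^2 / T \<le> S"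
    by (simp add: power2_eq_square field_simps)
  then show ?thesis
    using T unfolding I_def S_def by (simp add: field_simps)
qed

lemma integral_square_cos_ge_half:
  fixes s :: "real \<Rightarrow> real"
  assumes small: "\<bar>d\<bar> * T \<le> 1"
    and measurable: "s \<in> borel_measurable (lebesgue_on {0..T})"
    and square_integrable: "integrable (lebesgue_on {0..T}) (\<lambda>t. (s t)^2)"
  shows "integral\<^sup>L (lebesgue_on {0..T}) (\<lambda>t. (s t)^2) / 2
    \<le> integral\<^sup>L (lebesgue_on {0..T}) (\<lambda>t. (s t)^2 * cos (d * (t - T)))"
proof -
  let ?M = "lebesgue_on {0..T}"
  have cos_ge: "cos (d * (t - T)) \<ge> 1/2" if "t \<in> {0..T}" for t
  proof (rule cos_ge_half)
    have "\<bar>d * (t - T)\<bar> \<le> \<bar>d\<bar> * T"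
      using that by (simp add: abs_mult mult_left_mono)
    then show "\<bar>d * (t - T)\<bar> \<le> 1"
      using small by linarith
  qed
  have "(\<lambda>t. cos (d * (t - T))) \<in> borel_measurable ?M"
    by (rule continuous_imp_measurable_on_sets_lebesgue) (auto intro!: continuous_intros)
  then have weighted_integrable: "integrable ?M (\<lambda>t. (s t)^2 * cos (d * (t - T)))"
    using measurable
    by (intro Bochner_Integration.integrable_bound[OF square_integrable])
      (auto simp: abs_mult mult_left_le)
  have "integral\<^sup>L ?M (\<lambda>t. (s t)^2) / 2 = integral\<^sup>L ?M (\<lambda>t. (s t)^2 * (1/2))"
    by simp
  also have "\<dots> \<le> integral\<^sup>L ?M (\<lambda>t. (s t)^2 * cos (d * (t - T)))"
  proof (rule integral_mono)
    fix t assume "t \<in> space ?M"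
    then show "(s t)^2 * (1/2) \<le> (s t)^2 * cos (d * (t - T))"
      using cos_ge by (intro mult_left_mono) auto
  qed (use square_integrable weighted_integrable in auto)
  finally show ?thesis .
qed

lemma abs_volterra_form_le:
  fixes s :: "real \<Rightarrow> real" and k :: "real \<Rightarrow> real \<Rightarrow> real"
  assumes T: "T > 0" and measurable: "s \<in> borel_measurable (lebesgue_on {0..T})"
    and square_integrable: "integrable (lebesgue_on {0..T}) (\<lambda>t. (s t)^2)"
    and kernel_bounded: "\<And>t \<tau>. \<bar>k t \<tau>\<bar> \<le> B"
  shows "\<bar>integral\<^sup>L (lebesgue_on {0..T})
            (\<lambda>t. s t * integral\<^sup>L (lebesgue_on {0..t}) (\<lambda>\<tau>. s \<tau> * k t \<tau>))\<bar>
    \<le> B * T * integral\<^sup>L (lebesgue_on {0..T}) (\<lambda>t. (s t)^2)"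
proof -
  let ?M = "lebesgue_on {0..T}"
  define I where "I = integral\<^sup>L ?M (\<lambda>t. \<bar>s t\<bar>)"
  define g where "g t = integral\<^sup>L (lebesgue_on {0..t}) (\<lambda>\<tau>. s \<tau> * k t \<tau>)" for t
  have B: "B \<ge> 0"
    using kernel_bounded[of 0 0] by linarith
  have abs_integrable: "integrable ?M (\<lambda>t. \<bar>s t\<bar>)"
    using measurable square_integrable
    by (intro integrable_abs_if_square_integrable) (auto intro: finite_measure_lebesgue_on)
  have "I \<ge> 0"
    unfolding I_def by (auto intro: integral_nonneg_AE)
  have g_le: "\<bar>g t\<bar> \<le> B * I" if "t \<in> {0..T}" for t
  proof -
    have "\<bar>g t\<bar> \<le> integral\<^sup>L (lebesgue_on {0..t}) (\<lambda>\<tau>. \<bar>s \<tau> * k t \<tau>\<bar>)"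
      unfolding g_def using integral_norm_bound[of _ "\<lambda>\<tau>. s \<tau> * k t \<tau>"] by simp
    also have "\<dots> \<le> integral\<^sup>L ?M (\<lambda>\<tau>. B * \<bar>s \<tau>\<bar>)"
    proof (rule integral_mono_lebesgue_on_AE)
      show "AE \<tau> in lebesgue_on {0..t}. \<bar>s \<tau> * k t \<tau>\<bar> \<le> B * \<bar>s \<tau>\<bar>"
        by (intro AE_I2) (simp add: abs_mult mult.commute[of B] mult_left_mono kernel_bounded)
    qed (use abs_integrable B that in auto)
    also have "\<dots> = B * I"
      unfolding I_def by simp
    finally show ?thesis .
  qed
  have "\<bar>integral\<^sup>L ?M (\<lambda>t. s t * g t)\<bar> \<le> B * I * I"
  proof (cases "integrable ?M (\<lambda>t. s t * g t)")
    case True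
    have "norm (integral\<^sup>L ?M (\<lambda>t. s t * g t)) \<le> integral\<^sup>L ?M (\<lambda>t. \<bar>s t\<bar> * (B * I))"
      using abs_integrable g_le
      by (intro Bochner_Integration.integral_norm_bound_integral[OF True])
        (auto simp: abs_mult mult_left_mono)
    then show ?thesis
      unfolding I_def by (simp add: ac_simps)
  next
    case False
    then show ?thesis
      using B \<open>I \<ge> 0\<close> by (simp add: not_integrable_integral_eq)
  qed
  also have "\<dots> \<le> B * (T * integral\<^sup>L ?M (\<lambda>t. (s t)^2))"
    using square_integral_abs_le[OF T measurable square_integrable] B
    unfolding I_def by (simp add: power2_eq_square mult.assoc mult_left_mono)
  finally show ?thesis
    unfolding g_def by (simp add: mult.assoc)
qed

lemma neg_sgn_Qn_ge:
  fixes s :: "real \<Rightarrow> real"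
  assumes T: "T > 0" and cos_small: "\<bar>lam K - lam 1\<bar> * T \<le> 1"
    and kern_le: "\<And>t \<tau>. \<bar>kern mu n K T t \<tau>\<bar> \<le> B"
    and volterra_small: "B * T \<le> \<bar>AnK mu n K\<bar> / 4"
    and measurable: "s \<in> borel_measurable (lebesgue_on {0..T})"
    and square_integrable: "integrable (lebesgue_on {0..T}) (\<lambda>t. (s t)^2)"
  shows "- sgn (AnK mu n K) * Qn mu n K T s
    \<ge> \<bar>AnK mu n K\<bar> / 4 * integral\<^sup>L (lebesgue_on {0..T}) (\<lambda>t. (s t)^2)"
proof -
  define A where "A = AnK mu n K"
  define S where "S = integral\<^sup>L (lebesgue_on {0..T}) (\<lambda>t. (s t)^2)"
  define J where "J = integral\<^sup>L (lebesgue_on {0..T})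
    (\<lambda>t. (s t)^2 * cos ((lam K - lam 1) * (t - T)))"
  define X where "X = integral\<^sup>L (lebesgue_on {0..T})
    (\<lambda>t. s t * integral\<^sup>L (lebesgue_on {0..t}) (\<lambda>\<tau>. s \<tau> * kern mu n K T t \<tau>))"
  have "S / 2 \<le> J"
    unfolding S_def J_def
    by (rule integral_square_cos_ge_half[OF cos_small measurable square_integrable])
  moreover have "\<bar>X\<bar> \<le> \<bar>A\<bar> / 4 * S"
  proof -
    have "\<bar>X\<bar> \<le> B * T * S"
      unfolding X_def S_def
      by (rule abs_volterra_form_le[OF T measurable square_integrable kern_le])
    also have "\<dots> \<le> \<bar>A\<bar> / 4 * S"
      using volterra_small unfolding S_def A_def
      by (intro mult_right_mono integral_nonneg_AE) auto
    finally show ?thesis .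
  qed
  moreover have "- sgn A * Qn mu n K T s = \<bar>A\<bar> * J - sgn A * X"
    unfolding Qn_def A_def J_def X_def by (simp add: algebra_simps sgn_mult_self_eq abs_sgn)
  moreover have "\<bar>sgn A * X\<bar> \<le> \<bar>X\<bar>"
    by (simp add: abs_mult abs_sgn_eq)
  ultimately show ?thesis
    using mult_left_mono[of "S / 2" J "\<bar>A\<bar>"] unfolding S_def A_def by (auto simp: abs_le_iff)
qed

theorem lemma5p2:
  fixes mu :: "real \<Rightarrow> real" and K n :: nat
  assumes "K \<ge> 1" and "n \<ge> 1"
    and "H3_01 mu"
    and "summable (\<lambda>i. real (Suc i) ^ (4 * n) * \<bar>cc mu K (Suc i)\<bar>)"
    and "AnK mu n K \<noteq> 0"
  shows "\<exists>Tstar > 0. \<forall>T. 0 < T \<and> T < Tstar \<longrightarrow>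
           (\<forall>s :: real \<Rightarrow> real.
              s \<in> borel_measurable (lebesgue_on {0..T}) \<and>
              integrable (lebesgue_on {0..T}) (\<lambda>t. (s t)^2) \<longrightarrow>
              - sgn (AnK mu n K) * Qn mu n K T s \<ge>
                \<bar>AnK mu n K\<bar> / 4 * integral\<^sup>L (lebesgue_on {0..T}) (\<lambda>t. (s t)^2))"
proof -
  define A where "A = AnK mu n K"
  define B where "B = (pi^4 * (real K^2 + 1))^n
    * (\<Sum>i. real (Suc i) ^ (4 * n) * \<bar>cc mu K (Suc i)\<bar>)"
  define d where "d = lam K - lam 1"
  have kern_le: "\<And>T t \<tau>. \<bar>kern mu n K T t \<tau>\<bar> \<le> B"
    unfolding B_def by (rule abs_kern_le[OF assms(4)])
  then have "B \<ge> 0"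
    using order_trans[OF abs_ge_zero] by blast
  have "\<bar>A\<bar> > 0"
    using assms(5) unfolding A_def by simp
  define Tstar where "Tstar = min (1 / (\<bar>d\<bar> + 1)) (\<bar>A\<bar> / (4 * (B + 1)))"
  have "Tstar > 0"
    unfolding Tstar_def using \<open>\<bar>A\<bar> > 0\<close> \<open>B \<ge> 0\<close> by simp
  moreover have "\<bar>d\<bar> * T \<le> 1" "B * T \<le> \<bar>A\<bar> / 4" if "0 < T" "T < Tstar" for T
    using that \<open>B \<ge> 0\<close> unfolding Tstar_def by (auto simp: field_simps)
  ultimately show ?thesis
    unfolding A_def d_def using neg_sgn_Qn_ge[OF _ _ kern_le] by blast
qed

end
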